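(* Let $\mathcal F=\{F^c_{t,k}\}$ be an F-system and $R,\lambda$ reals such that $|F^A_t\cup F^B_t|\le Rt+\lambda$ for every positive integer $t$. Then for every even positive integer $t$, $$|S_{2t}\cup Z_{3t,2t}|\ge 2\,|S_t\cup Z_{3t/2,t}|+(10-7R)t-3\lambda.$$
   Context: F-system: a family $\mathcal F=\{F^c_{t,k}\}$ of sets of positive integers, indexed by $c\in\{A,B\}$ and integers $0<k\le t$, such that (F1) $|F^c_{t,k}|\ge k$ for all $c,t,k$; and (F2) $F^A_{t,k}\cap F^B_{t',k'}=\emptyset$ for all $k\le t$, $k'\le t'$ with $k+k'\le\max(t,t')$. Notation: $F^c_t=\bigcup_{0<\kappa\le\tau\le t}F^c_{\tau,\kappa}$ for $c\in\{A,B\}$; $S_t=F^A_t\cap F^B_t$; for even $t$, $Z_{3t/2,t}=F^A_{3t/2,t}\cap F^B_{3t/2,t}$ (so also $Z_{3t,2t}=F^A_{3t,2t}\cap F^B_{3t,2t}$). *)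

theory Defs
  imports Complex_Main
begin

text \<open>An F-system is given by two families FA, FB :: nat => nat => nat set,
  FA t k standing for F^A_{t,k} and FB t k for F^B_{t,k}; only indices with
  0 < k <= t are meaningful.  Sets may a priori be infinite; (F1) says
  |F| >= k, which holds automatically for infinite sets.\<close>

definition F_system :: "(nat \<Rightarrow> nat \<Rightarrow> nat set) \<Rightarrow> (nat \<Rightarrow> nat \<Rightarrow> nat set) \<Rightarrow> bool" where
  "F_system FA FB \<longleftrightarrow>
     (\<forall>t k. 0 < k \<and> k \<le> t \<longrightarrow> 0 \<notin> FA t k \<and> 0 \<notin> FB t k) \<and>
     (\<forall>t k. 0 < k \<and> k \<le> t \<longrightarrow>
        (finite (FA t k) \<longrightarrow> k \<le> card (FA t k)) \<and>
        (finite (FB t k) \<longrightarrow> k \<le> card (FB t k))) \<and>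
     (\<forall>t k t' k'. 0 < k \<and> k \<le> t \<and> 0 < k' \<and> k' \<le> t' \<and> k + k' \<le> max t t' \<longrightarrow>
        FA t k \<inter> FB t' k' = {})"

definition Fupto :: "(nat \<Rightarrow> nat \<Rightarrow> nat set) \<Rightarrow> nat \<Rightarrow> nat set" where
  "Fupto F t = (\<Union>\<tau>\<in>{1..t}. \<Union>\<kappa>\<in>{1..\<tau>}. F \<tau> \<kappa>)"

definition Sset :: "(nat \<Rightarrow> nat \<Rightarrow> nat set) \<Rightarrow> (nat \<Rightarrow> nat \<Rightarrow> nat set) \<Rightarrow> nat \<Rightarrow> nat set" where
  "Sset FA FB t = Fupto FA t \<inter> Fupto FB t"

definition Zset :: "(nat \<Rightarrow> nat \<Rightarrow> nat set) \<Rightarrow> (nat \<Rightarrow> nat \<Rightarrow> nat set) \<Rightarrow> nat \<Rightarrow> nat \<Rightarrow> nat set" where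
  "Zset FA FB s k = FA s k \<inter> FB s k"

end

theory Submission
  imports Defs
begin

(*
  Write X = S_t \<union> Z_{3t/2,t} (the "old layer"), W = S_{2t} \<union> Z_{3t,2t},
  U_s = F^A_s \<union> F^B_s, and for a block F^A_{s,k} let M^A_{s,k} = F^A_{s,k} \<inter> F^B_s
  be its part already lying in S_s (symmetrically M^B_{s,k}).
  (1) By (F2), X avoids every block F^c_{a,k} with t + k \<le> a; hence X, Z_{3t,2t},
      M^A_{2t,t} and M^B_{2t,t} are pairwise disjoint subsets of W, so
      |X| + |Z_{3t,2t}| + |M^A_{2t,t}| + |M^B_{2t,t}| \<le> |W|.
  (2) Inclusion-exclusion inside U_{3t} together with (F1) gives
      |X| + 4t \<le> |U_{3t}| + |Z_{3t,2t}|.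
  (3) Inclusion-exclusion inside U_{2t} together with (F1) gives
      3t \<le> |M^c_{2t,t}| + |U_{2t}| for c = A, B.
  Adding, |W| \<ge> 2|X| + 10t - |U_{3t}| - 2|U_{2t}|, and the hypothesis
  |U_s| \<le> Rs + \<lambda> turns this into the claimed bound.
  The F-system axioms are symmetric in A and B, which halves the case work.
*)

lemma Fupto_mem:
  "x \<in> Fupto F s \<longleftrightarrow> (\<exists>a b. 1 \<le> a \<and> a \<le> s \<and> 1 \<le> b \<and> b \<le> a \<and> x \<in> F a b)"
  unfolding Fupto_def by (simp add: Bex_def)

lemma Fupto_mono: "s \<le> s' \<Longrightarrow> Fupto F s \<subseteq> Fupto F s'"
  unfolding subset_iff Fupto_mem by (meson order.trans)

lemma block_subset_Fupto: "1 \<le> b \<Longrightarrow> b \<le> a \<Longrightarrow> a \<le> s \<Longrightarrow> F a b \<subseteq> Fupto F s"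
  unfolding subset_iff Fupto_mem by (meson order.trans)

lemma F_system_disjoint:
  assumes "F_system FA FB" "0 < k" "k \<le> a" "0 < k'" "k' \<le> a'" "k + k' \<le> max a a'"
  shows "FA a k \<inter> FB a' k' = {}"
  using assms unfolding F_system_def by blast

lemma F_system_swap:
  assumes "F_system FA FB"
  shows "F_system FB FA"
proof -
  have "FB a k \<inter> FA a' k' = {}"
    if "0 < k" "k \<le> a" "0 < k'" "k' \<le> a'" "k + k' \<le> max a a'" for a k a' k'
    using F_system_disjoint[OF assms that(3,4,1,2)] that(5)
    by (simp add: max.commute add.commute Int_commute)
  then show ?thesis
    using assms unfolding F_system_def by (intro conjI allI impI; elim conjE; simp)
qed

lemma Sset_swap: "Sset FB FA s = Sset FA FB s"
  unfolding Sset_def by blast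

lemma Zset_swap: "Zset FB FA s k = Zset FA FB s k"
  unfolding Zset_def by blast

lemma F_system_card:
  assumes "F_system FA FB" "0 < k" "k \<le> a" "finite (FA a k)"
  shows "k \<le> card (FA a k)"
  using assms unfolding F_system_def by blast

lemma card_overlap_lower:
  assumes "finite U" "X \<union> A \<union> B \<subseteq> U" "X \<inter> (A \<union> B) = {}"
  shows "card X + card A + card B \<le> card U + card (A \<inter> B)"
proof -
  have fin: "finite X" "finite A" "finite B"
    using assms(1,2) finite_subset by blast+
  have "card A + card B = card (A \<union> B) + card (A \<inter> B)"
    using card_Un_Int[OF fin(2,3)] .
  moreover have "card X + card (A \<union> B) = card (X \<union> (A \<union> B))"
    using fin assms(3) by (simp add: card_Un_disjoint)
  moreover have "card (X \<union> (A \<union> B)) \<le> card U"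
    using assms(1,2) by (intro card_mono) auto
  ultimately show ?thesis by linarith
qed

lemma card_four_disjoint_le:
  assumes "finite W" "A \<union> B \<union> C \<union> D \<subseteq> W"
    and "A \<inter> B = {}" "A \<inter> C = {}" "A \<inter> D = {}"
    and "B \<inter> C = {}" "B \<inter> D = {}" "C \<inter> D = {}"
  shows "card A + card B + card C + card D \<le> card W"
proof -
  have fin: "finite A" "finite B" "finite C" "finite D"
    using assms(1,2) finite_subset by blast+
  have "card (A \<union> B \<union> C \<union> D) = card A + card B + card C + card D"
    using fin assms(3-8) by (simp add: card_Un_disjoint Int_Un_distrib2)
  moreover have "card (A \<union> B \<union> C \<union> D) \<le> card W"
    using assms(1,2) by (rule card_mono)
  ultimately show ?thesis by simp
qed

text \<open>Every element of S_t \<union> Z_{h,t} lies in a block F^A_{a,b} with b \<le> t, so by (F2)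
  it avoids every B-block F^B_{a',k} with t + k \<le> a'.\<close>

lemma old_layer_avoids_FB:
  assumes FS: "F_system FA FB" and "0 < t" "t \<le> h" "0 < k" "t + k \<le> a'"
  shows "(Sset FA FB t \<union> Zset FA FB h t) \<inter> FB a' k = {}"
proof -
  have low_block: "\<exists>a b. x \<in> FA a b \<and> 1 \<le> b \<and> b \<le> a \<and> b \<le> t"
    if "x \<in> Sset FA FB t \<union> Zset FA FB h t" for x
  proof -
    from that consider "x \<in> Fupto FA t" | "x \<in> FA h t"
      unfolding Sset_def Zset_def by blast
    then show ?thesis
    proof cases
      case 1
      then show ?thesis unfolding Fupto_mem by (meson order.trans)
    next
      case 2
      then show ?thesis using assms(2,3) by (intro exI[of _ h] exI[of _ t]) auto
    qed
  qed
  have "x \<notin> FB a' k" if "x \<in> FA a b" "1 \<le> b" "b \<le> a" "b \<le> t" for x a b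
  proof -
    have "b + k \<le> max a a'" using that(4) assms(5) by (simp add: le_max_iff_disj)
    then show ?thesis using F_system_disjoint[OF FS, of b a k a'] that assms(4,5) by auto
  qed
  with low_block show ?thesis by blast
qed

lemma old_layer_avoids_FA:
  assumes "F_system FA FB" and "0 < t" "t \<le> h" "0 < k" "t + k \<le> a'"
  shows "(Sset FA FB t \<union> Zset FA FB h t) \<inter> FA a' k = {}"
  using old_layer_avoids_FB[OF F_system_swap[OF assms(1)] assms(2-)]
  by (simp only: Sset_swap Zset_swap)

lemma old_layer_subset:
  assumes "0 < t" "t \<le> h" "h \<le> s"
  shows "Sset FA FB t \<union> Zset FA FB h t \<subseteq> Sset FA FB s"
proof -
  have "Fupto F t \<subseteq> Fupto F s" "F h t \<subseteq> Fupto F s" for F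
    using assms Fupto_mono[of t s F] block_subset_Fupto[of t h s F] by auto
  then show ?thesis unfolding Sset_def Zset_def by blast
qed

definition Mset :: "(nat \<Rightarrow> nat \<Rightarrow> nat set) \<Rightarrow> (nat \<Rightarrow> nat \<Rightarrow> nat set) \<Rightarrow> nat \<Rightarrow> nat \<Rightarrow> nat set"
  where "Mset FA FB s k = FA s k \<inter> Fupto FB s"

text \<open>Bound (3): F^A_{s,k} has at least k elements and F^B_s at least s (it contains
  F^B_{s,s}); both live in U_s, so their overlap is at least k + s - |U_s|.\<close>

lemma Mset_card_lower:
  assumes FS: "F_system FA FB" and "0 < k" "k \<le> s"
    and fin: "finite (Fupto FA s \<union> Fupto FB s)"
  shows "k + s \<le> card (Mset FA FB s k) + card (Fupto FA s \<union> Fupto FB s)"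
proof -
  have sub: "FA s k \<subseteq> Fupto FA s" "FB s s \<subseteq> Fupto FB s"
    using assms(2,3) block_subset_Fupto by auto
  have "k \<le> card (FA s k)"
    using F_system_card[OF FS assms(2,3)] sub fin finite_subset by blast
  moreover have "s \<le> card (FB s s)"
    using F_system_card[OF F_system_swap[OF FS], of s s] assms(2,3) sub fin finite_subset
    by blast
  moreover have "card (FB s s) \<le> card (Fupto FB s)"
    using sub fin by (intro card_mono) auto
  moreover have "card (FA s k) + card (Fupto FB s)
      \<le> card (Fupto FA s \<union> Fupto FB s) + card (Mset FA FB s k)"
    using card_overlap_lower[of "Fupto FA s \<union> Fupto FB s" "{}" "FA s k" "Fupto FB s"] sub fin
    unfolding Mset_def by auto
  ultimately show ?thesis by linarith
qed

text \<open>Bound (2): with t + k \<le> a, the old layer and the two blocks F^c_{a,k} (each of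
  size at least k) are disjoint parts of U_a apart from the overlap Z_{a,k}.\<close>

lemma Zset_card_lower:
  assumes FS: "F_system FA FB" and "0 < t" "t \<le> h" "h \<le> a" "0 < k" "t + k \<le> a"
    and fin: "finite (Fupto FA a \<union> Fupto FB a)"
  shows "card (Sset FA FB t \<union> Zset FA FB h t) + 2 * k
           \<le> card (Fupto FA a \<union> Fupto FB a) + card (Zset FA FB a k)"
proof -
  let ?X = "Sset FA FB t \<union> Zset FA FB h t"
  have sub: "FA a k \<subseteq> Fupto FA a" "FB a k \<subseteq> Fupto FB a"
    using assms(5,6) block_subset_Fupto by auto
  have "k \<le> card (FA a k)"
    using F_system_card[OF FS, of k a] assms(5,6) sub fin finite_subset by auto
  moreover have "k \<le> card (FB a k)"
    using F_system_card[OF F_system_swap[OF FS], of k a] assms(5,6) sub fin finite_subset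
    by auto
  moreover have "card ?X + card (FA a k) + card (FB a k)
      \<le> card (Fupto FA a \<union> Fupto FB a) + card (Zset FA FB a k)"
  proof -
    have "?X \<subseteq> Fupto FA a \<union> Fupto FB a"
      using old_layer_subset[OF assms(2-4)] unfolding Sset_def by blast
    moreover have "?X \<inter> (FA a k \<union> FB a k) = {}"
      using old_layer_avoids_FA[OF FS assms(2,3,5,6)] old_layer_avoids_FB[OF FS assms(2,3,5,6)]
      by blast
    ultimately show ?thesis
      unfolding Zset_def using sub fin by (intro card_overlap_lower) auto
  qed
  ultimately show ?thesis by linarith
qed

lemma new_layer_decomposition:
  assumes FS: "F_system FA FB" and "0 < t" "t \<le> h" "h \<le> 2*t"
    and fin: "finite (Sset FA FB (2*t) \<union> Zset FA FB (3*t) (2*t))"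
  shows "card (Sset FA FB t \<union> Zset FA FB h t) + card (Zset FA FB (3*t) (2*t))
           + card (Mset FA FB (2*t) t) + card (Mset FB FA (2*t) t)
         \<le> card (Sset FA FB (2*t) \<union> Zset FA FB (3*t) (2*t))"
proof (rule card_four_disjoint_le[OF fin])
  let ?X = "Sset FA FB t \<union> Zset FA FB h t"
  have avoid: "?X \<inter> FB (3*t) (2*t) = {}" "?X \<inter> FA (2*t) t = {}" "?X \<inter> FB (2*t) t = {}"
    using old_layer_avoids_FB[OF FS assms(2,3), of "2*t" "3*t"]
      old_layer_avoids_FA[OF FS assms(2,3), of t "2*t"]
      old_layer_avoids_FB[OF FS assms(2,3), of t "2*t"] assms(2) by auto
  have blocks: "FA (2*t) t \<inter> FB (3*t) (2*t) = {}" "FA (3*t) (2*t) \<inter> FB (2*t) t = {}"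
      "FA (2*t) t \<inter> FB (2*t) t = {}"
    using F_system_disjoint[OF FS, of t "2*t" "2*t" "3*t"]
      F_system_disjoint[OF FS, of "2*t" "3*t" t "2*t"]
      F_system_disjoint[OF FS, of t "2*t" t "2*t"] assms(2) by auto
  have "FA (2*t) t \<subseteq> Fupto FA (2*t)" "FB (2*t) t \<subseteq> Fupto FB (2*t)"
    using assms(2) block_subset_Fupto by auto
  then show "?X \<union> Zset FA FB (3*t) (2*t) \<union> Mset FA FB (2*t) t \<union> Mset FB FA (2*t) t
      \<subseteq> Sset FA FB (2*t) \<union> Zset FA FB (3*t) (2*t)"
    using old_layer_subset[OF assms(2-4)] unfolding Mset_def Sset_def by blast
  show "?X \<inter> Zset FA FB (3*t) (2*t) = {}" "?X \<inter> Mset FA FB (2*t) t = {}"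
      "?X \<inter> Mset FB FA (2*t) t = {}"
    using avoid unfolding Zset_def Mset_def by blast+
  show "Zset FA FB (3*t) (2*t) \<inter> Mset FA FB (2*t) t = {}"
      "Zset FA FB (3*t) (2*t) \<inter> Mset FB FA (2*t) t = {}"
      "Mset FA FB (2*t) t \<inter> Mset FB FA (2*t) t = {}"
    using blocks unfolding Zset_def Mset_def by blast+
qed

theorem mainTheorem9:
  fixes FA FB :: "nat \<Rightarrow> nat \<Rightarrow> nat set" and R lam :: real
  assumes "F_system FA FB"
    and "\<And>t. 0 < t \<Longrightarrow> finite (Fupto FA t \<union> Fupto FB t) \<and>
             real (card (Fupto FA t \<union> Fupto FB t)) \<le> R * real t + lam"
    and "0 < t" and "even t"
  shows "real (card (Sset FA FB (2*t) \<union> Zset FA FB (3*t) (2*t)))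
         \<ge> 2 * real (card (Sset FA FB t \<union> Zset FA FB (3*t div 2) t)) + (10 - 7*R) * real t - 3*lam"
proof -
  let ?h = "3*t div 2"
  let ?X = "Sset FA FB t \<union> Zset FA FB ?h t"
  let ?Z = "Zset FA FB (3*t) (2*t)"
  let ?W = "Sset FA FB (2*t) \<union> ?Z"
  let ?U = "\<lambda>s. Fupto FA s \<union> Fupto FB s"
  have h: "t \<le> ?h" "?h \<le> 2*t" by auto
  have U2: "finite (?U (2*t))" "real (card (?U (2*t))) \<le> 2 * (R * real t) + lam"
    using assms(2)[of "2*t"] assms(3) by auto
  have U3: "finite (?U (3*t))" "real (card (?U (3*t))) \<le> 3 * (R * real t) + lam"
    using assms(2)[of "3*t"] assms(3) by auto
  have "?W \<subseteq> ?U (3*t)"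
    using old_layer_subset[of "2*t" "3*t" "3*t" FA FB] assms(3) unfolding Sset_def by auto
  then have "finite ?W" using U3(1) finite_subset by blast
  have decomposition: "card ?X + card ?Z + card (Mset FA FB (2*t) t) + card (Mset FB FA (2*t) t)
      \<le> card ?W"
    by (rule new_layer_decomposition[OF assms(1,3) h \<open>finite ?W\<close>])
  have zone: "card ?X + 2 * (2*t) \<le> card (?U (3*t)) + card ?Z"
    by (rule Zset_card_lower[OF assms(1,3) h(1) _ _ _ U3(1)]) (use assms(3) in auto)
  have cross_A: "t + 2*t \<le> card (Mset FA FB (2*t) t) + card (?U (2*t))"
    by (rule Mset_card_lower[OF assms(1) _ _ U2(1)]) (use assms(3) in auto)
  have "t + 2*t \<le> card (Mset FB FA (2*t) t) + card (Fupto FB (2*t) \<union> Fupto FA (2*t))"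
    by (rule Mset_card_lower[OF F_system_swap[OF assms(1)]]) (use assms(3) U2(1) in auto)
  then have cross_B: "t + 2*t \<le> card (Mset FB FA (2*t) t) + card (?U (2*t))"
    by (simp only: Un_commute)
  from decomposition zone cross_A cross_B
  have "2 * card ?X + 10*t \<le> card ?W + card (?U (3*t)) + 2 * card (?U (2*t))"
    by linarith
  then have "real (2 * card ?X + 10*t) \<le> real (card ?W + card (?U (3*t)) + 2 * card (?U (2*t)))"
    by (rule of_nat_mono)
  then have "2 * real (card ?X) + 10 * real t
      \<le> real (card ?W) + real (card (?U (3*t))) + 2 * real (card (?U (2*t)))"
    by simp
  with U2(2) U3(2) show ?thesis by (simp add: algebra_simps)
qed

end
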